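(* Let $H$ be the orthocenter of $T=P_1P_2P_3$. (i) For each $i$, the line $P_iP_i''$ is the altitude of $T$ from $P_i$; in particular the three lines $P_iP_i''$ concur at $H$, so $T$ and $T''=P_1''P_2''P_3''$ are perspective with perspector $H$, and the perpendiculars from $P_i''$ to the side of $T$ opposite $P_i$ all pass through $H$. (ii) For each $i$, with $\{i,j,k\}=\{1,2,3\}$, the perpendicular from $P_i$ to the line $P_j''P_k''$ passes through $-M$ (the reflection of $M$ in $O$). Hence $T$ and $T''$ are orthologic with orthology centers $H$ and $-M$.
   Context: Let $a>b>0$ and $c>0$ with $c^2=a^2-b^2$. Let $\mathcal{E}$ be the ellipse $x^2/a^2+y^2/b^2=1$ with center $O=(0,0)$, parametrized by $P(t)=(a\cos t,b\sin t)$. Fix $u\in\mathbb{R}$ and let $M=(a\cos u,b\sin u)$. For $i=1,2,3$ let $t_i=-u/3-2\pi(i-1)/3$, $P_i=P(t_i)$, and $P_i''=\left(\frac{c^2\cos^3 t_i}{a},-\frac{c^2\sin^3 t_i}{b}\right)$ (the center of curvature of $\mathcal{E}$ at $P_i$). Two triangles $ABC$, $DEF$ are orthologic if the perpendiculars from $A,B,C$ to $EF,FD,DE$ respectively are concurrent; the concurrence points of these perpendiculars and of the perpendiculars from $D,E,F$ to $BC,CA,AB$ are the orthology centers. *)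

theory Defs
  imports Complex_Main
begin

type_synonym pt = "real \<times> real"

definition dotp :: "pt \<Rightarrow> pt \<Rightarrow> real" where
  "dotp p q = fst p * fst q + snd p * snd q"

definition vsub :: "pt \<Rightarrow> pt \<Rightarrow> pt" where
  "vsub p q = (fst p - fst q, snd p - snd q)"

definition neg_pt :: "pt \<Rightarrow> pt" where
  "neg_pt p = (- fst p, - snd p)"

definition on_line :: "pt \<Rightarrow> pt \<Rightarrow> pt \<Rightarrow> bool" where
  "on_line X A B \<longleftrightarrow> A \<noteq> B \<and>
     (fst B - fst A) * (snd X - snd A) - (snd B - snd A) * (fst X - fst A) = 0"

definition on_perp :: "pt \<Rightarrow> pt \<Rightarrow> pt \<Rightarrow> pt \<Rightarrow> bool" where
  "on_perp X A B C \<longleftrightarrow> B \<noteq> C \<and> dotp (vsub X A) (vsub C B) = 0"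

definition collinear3 :: "pt \<Rightarrow> pt \<Rightarrow> pt \<Rightarrow> bool" where
  "collinear3 A B C \<longleftrightarrow>
     (fst B - fst A) * (snd C - snd A) - (snd B - snd A) * (fst C - fst A) = 0"

definition orthocenter :: "pt \<Rightarrow> pt \<Rightarrow> pt \<Rightarrow> pt" where
  "orthocenter A B C = (THE H. on_perp H A B C \<and> on_perp H B C A \<and> on_perp H C A B)"

definition orthology_center :: "pt \<Rightarrow> pt \<Rightarrow> pt \<Rightarrow> pt \<Rightarrow> pt \<Rightarrow> pt \<Rightarrow> pt \<Rightarrow> bool" where
  "orthology_center A B C D E F Z \<longleftrightarrow> on_perp Z A E F \<and> on_perp Z B F D \<and> on_perp Z C D E"

definition orthologic :: "pt \<Rightarrow> pt \<Rightarrow> pt \<Rightarrow> pt \<Rightarrow> pt \<Rightarrow> pt \<Rightarrow> bool" where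
  "orthologic A B C D E F \<longleftrightarrow> (\<exists>Z. orthology_center A B C D E F Z)"

definition perspector :: "pt \<Rightarrow> pt \<Rightarrow> pt \<Rightarrow> pt \<Rightarrow> pt \<Rightarrow> pt \<Rightarrow> pt \<Rightarrow> bool" where
  "perspector A B C D E F Z \<longleftrightarrow> on_line Z A D \<and> on_line Z B E \<and> on_line Z C F"

end

theory Submission
  imports Defs
begin

(*
  Write P(s) = (a cos s, b sin s) and Q(s) for the centre of curvature at P(s); the vertices of T
  are P(\<theta>), P(\<theta> - 2\<pi>/3), P(\<theta> + 2\<pi>/3) up to a cyclic relabelling, with \<theta> = t_i and
  M = P(-3\<theta>).
  (i) A chord P(\<theta> - d) P(\<theta> + d) is parallel to the tangent at P(\<theta>), and Q(\<theta>) lies on the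
  normal there; so the line P_i Q_i is the altitude from P_i, and H lies on it.
  (ii) Since cos\<^sup>3 s = (3 cos s + cos 3s)/4 and sin\<^sup>3 s = (3 sin s - sin 3s)/4, and cos 3s, sin 3s
  take equal values at s = \<theta> \<plusminus> 2\<pi>/3, the side Q_j Q_k is a multiple of
  (-sin \<theta> / a, -cos \<theta> / b), and -M - P_i = (-a(cos 3\<theta> + cos \<theta>), b(sin 3\<theta> - sin \<theta>)) is
  orthogonal to it because sin(3\<theta> - \<theta>) = 2 sin \<theta> cos \<theta>.
*)

lemma on_perp_commute: "on_perp X A B C \<longleftrightarrow> on_perp X A C B"
proof -
  have "dotp (vsub X A) (vsub B C) = - dotp (vsub X A) (vsub C B)"
    by (simp add: dotp_def vsub_def algebra_simps)
  then show ?thesis unfolding on_perp_def by auto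
qed

lemma on_line_iff_on_perp:
  assumes "A \<noteq> B" "C \<noteq> D" "dotp (vsub B A) (vsub D C) = 0"
  shows "on_line X A B \<longleftrightarrow> on_perp X A C D"
proof -
  obtain n1 n2 where n: "vsub B A = (n1, n2)" by (cases "vsub B A")
  obtain d1 d2 where d: "vsub D C = (d1, d2)" by (cases "vsub D C")
  obtain x1 x2 where x: "vsub X A = (x1, x2)" by (cases "vsub X A")
  have nd: "n1 * d1 + n2 * d2 = 0" using assms(3) n d by (simp add: dotp_def)
  have "n1 ^ 2 + n2 ^ 2 \<noteq> 0" "d1 ^ 2 + d2 ^ 2 \<noteq> 0"
    using assms(1,2) n d by (auto simp: vsub_def sum_power2_eq_zero_iff prod_eq_iff)
  moreover have "(n1 * d2 - n2 * d1) ^ 2 = (n1 ^ 2 + n2 ^ 2) * (d1 ^ 2 + d2 ^ 2)"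
    using nd by algebra
  ultimately have det: "n1 * d2 - n2 * d1 \<noteq> 0" by auto
  have "(n1 ^ 2 + n2 ^ 2) * (x1 * d1 + x2 * d2) = (n1 * d2 - n2 * d1) * (n1 * x2 - n2 * x1)"
    using nd by algebra
  with \<open>n1 ^ 2 + n2 ^ 2 \<noteq> 0\<close> det have "n1 * x2 - n2 * x1 = 0 \<longleftrightarrow> x1 * d1 + x2 * d2 = 0"
    by (metis mult_eq_0_iff)
  then show ?thesis using assms(1,2) n d x
    by (simp add: on_line_def on_perp_def dotp_def vsub_def prod_eq_iff)
qed

lemma linear_system2_ex1:
  fixes v1 v2 w1 w2 p q :: real
  assumes det: "v1 * w2 - v2 * w1 \<noteq> 0"
  shows "\<exists>!X :: pt. v1 * fst X + v2 * snd X = p \<and> w1 * fst X + w2 * snd X = q"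
proof -
  define D where "D = v1 * w2 - v2 * w1"
  have D: "D \<noteq> 0" using det by (simp add: D_def)
  have "v1 * (p * w2 - q * v2) + v2 * (v1 * q - w1 * p) = p * D"
    "w1 * (p * w2 - q * v2) + w2 * (v1 * q - w1 * p) = q * D"
    by (simp_all add: D_def algebra_simps)
  then have sol: "v1 * ((p * w2 - q * v2) / D) + v2 * ((v1 * q - w1 * p) / D) = p
    \<and> w1 * ((p * w2 - q * v2) / D) + w2 * ((v1 * q - w1 * p) / D) = q"
    using D by (simp add: field_simps)
  show ?thesis
  proof (rule ex1I[of _ "((p * w2 - q * v2) / D, (v1 * q - w1 * p) / D)"])
    fix Y :: pt
    assume "v1 * fst Y + v2 * snd Y = p \<and> w1 * fst Y + w2 * snd Y = q"
    then have "D * fst Y = p * w2 - q * v2" "D * snd Y = v1 * q - w1 * p"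
      by (auto simp: D_def algebra_simps)
    then show "Y = ((p * w2 - q * v2) / D, (v1 * q - w1 * p) / D)"
      using D by (simp add: prod_eq_iff field_simps)
  qed (use sol in simp)
qed

lemma altitudes_sum_zero:
  "dotp (vsub X A) (vsub C B) + dotp (vsub X B) (vsub A C) + dotp (vsub X C) (vsub B A) = 0"
  by (simp add: dotp_def vsub_def algebra_simps)

lemma orthocenter_on_altitudes:
  assumes "\<not> collinear3 A B C"
  shows "on_perp (orthocenter A B C) A B C \<and> on_perp (orthocenter A B C) B C A
    \<and> on_perp (orthocenter A B C) C A B"
proof -
  have distinct: "A \<noteq> B" "B \<noteq> C" "C \<noteq> A" using assms by (auto simp: collinear3_def)
  have "\<exists>!X. dotp (vsub X A) (vsub C B) = 0 \<and> dotp (vsub X B) (vsub A C) = 0"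
  proof -
    have "(fst C - fst B) * (snd A - snd C) - (snd C - snd B) * (fst A - fst C) \<noteq> 0"
      using assms by (simp add: collinear3_def algebra_simps)
    from linear_system2_ex1[OF this, of "dotp A (vsub C B)" "dotp B (vsub A C)"]
    show ?thesis by (simp add: dotp_def vsub_def algebra_simps)
  qed
  then have "\<exists>!X. on_perp X A B C \<and> on_perp X B C A \<and> on_perp X C A B"
    using altitudes_sum_zero distinct unfolding on_perp_def by (smt (verit))
  then show ?thesis unfolding orthocenter_def by (rule theI')
qed

definition cyclic3 :: "nat \<Rightarrow> nat \<Rightarrow> nat \<Rightarrow> bool" where
  "cyclic3 i j k \<longleftrightarrow> (i, j, k) \<in> {(1, 2, 3), (2, 3, 1), (3, 1, 2)}"

lemma permutations3_from_cyclic3: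
  assumes "\<And>i j k. cyclic3 i j k \<Longrightarrow> R i j k" and "\<And>i j k. R i j k \<Longrightarrow> R i k j"
  shows "\<forall>i j k. {i, j, k} = {1, 2, 3 :: nat} \<longrightarrow> R i j k"
proof (intro allI impI)
  fix i j k :: nat
  assume ijk: "{i, j, k} = {1, 2, 3}"
  then have "i = 1 \<or> i = 2 \<or> i = 3" "j = 1 \<or> j = 2 \<or> j = 3" "k = 1 \<or> k = 2 \<or> k = 3"
    and "1 \<in> {i, j, k}" "2 \<in> {i, j, k}" "3 \<in> {i, j, k}"
    by blast+
  then have "cyclic3 i j k \<or> cyclic3 i k j"
    unfolding cyclic3_def by (elim disjE) simp_all
  then show "R i j k" using assms by blast
qed

lemma orthologic_of_points_on_altitudes:
  fixes P Q :: "nat \<Rightarrow> pt" and Z H :: pt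
  assumes ncol: "\<not> collinear3 (P 1) (P 2) (P 3)"
    and PQ_neq: "\<And>i. P i \<noteq> Q i"
    and Q_neq: "\<And>i j k. cyclic3 i j k \<Longrightarrow> Q j \<noteq> Q k"
    and altitude: "\<And>i j k. cyclic3 i j k \<Longrightarrow> dotp (vsub (Q i) (P i)) (vsub (P k) (P j)) = 0"
    and Z: "\<And>i j k. cyclic3 i j k \<Longrightarrow> dotp (vsub Z (P i)) (vsub (Q k) (Q j)) = 0"
    and H: "H = orthocenter (P 1) (P 2) (P 3)"
  shows "(\<forall>i j k. {i, j, k} = {1, 2, 3 :: nat} \<longrightarrow>
          P i \<noteq> Q i \<and> (\<forall>X. on_line X (P i) (Q i) \<longleftrightarrow> on_perp X (P i) (P j) (P k)))
    \<and> on_perp H (P 1) (P 2) (P 3) \<and> on_perp H (P 2) (P 3) (P 1) \<and> on_perp H (P 3) (P 1) (P 2)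
    \<and> perspector (P 1) (P 2) (P 3) (Q 1) (Q 2) (Q 3) H
    \<and> (\<forall>i j k. {i, j, k} = {1, 2, 3 :: nat} \<longrightarrow> on_perp H (Q i) (P j) (P k))
    \<and> (\<forall>i j k. {i, j, k} = {1, 2, 3 :: nat} \<longrightarrow> on_perp Z (P i) (Q j) (Q k))
    \<and> orthologic (P 1) (P 2) (P 3) (Q 1) (Q 2) (Q 3)
    \<and> orthology_center (Q 1) (Q 2) (Q 3) (P 1) (P 2) (P 3) H
    \<and> orthology_center (P 1) (P 2) (P 3) (Q 1) (Q 2) (Q 3) Z"
proof -
  have cyclic: "cyclic3 1 2 3" "cyclic3 2 3 1" "cyclic3 3 1 2" by (simp_all add: cyclic3_def)
  have P_neq: "P j \<noteq> P k" if "cyclic3 i j k" for i j k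
    using that ncol by (auto simp: cyclic3_def collinear3_def)
  have H_altitude: "on_perp H (P i) (P j) (P k)" if "cyclic3 i j k" for i j k
    using that orthocenter_on_altitudes[OF ncol] unfolding H by (auto simp: cyclic3_def)
  have line: "on_line X (P i) (Q i) \<longleftrightarrow> on_perp X (P i) (P j) (P k)" if "cyclic3 i j k" for i j k X
    using on_line_iff_on_perp[OF PQ_neq P_neq altitude] that by blast
  have HQ: "on_perp H (Q i) (P j) (P k)" if "cyclic3 i j k" for i j k
  proof -
    have "dotp (vsub H (Q i)) (vsub (P k) (P j))
        = dotp (vsub H (P i)) (vsub (P k) (P j)) - dotp (vsub (Q i) (P i)) (vsub (P k) (P j))"
      by (simp add: dotp_def vsub_def algebra_simps)
    then show ?thesis using H_altitude[OF that] altitude[OF that] by (simp add: on_perp_def)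
  qed
  have ZP: "on_perp Z (P i) (Q j) (Q k)" if "cyclic3 i j k" for i j k
    using Z[OF that] Q_neq[OF that] by (simp add: on_perp_def)
  have "\<forall>i j k. {i, j, k} = {1, 2, 3 :: nat} \<longrightarrow>
          P i \<noteq> Q i \<and> (\<forall>X. on_line X (P i) (Q i) \<longleftrightarrow> on_perp X (P i) (P j) (P k))"
  proof (rule permutations3_from_cyclic3)
    show "P i \<noteq> Q i \<and> (\<forall>X. on_line X (P i) (Q i) \<longleftrightarrow> on_perp X (P i) (P j) (P k))"
      if "cyclic3 i j k" for i j k
      using PQ_neq line[OF that] by blast
    show "P i \<noteq> Q i \<and> (\<forall>X. on_line X (P i) (Q i) \<longleftrightarrow> on_perp X (P i) (P k) (P j))"
      if "P i \<noteq> Q i \<and> (\<forall>X. on_line X (P i) (Q i) \<longleftrightarrow> on_perp X (P i) (P j) (P k))" for i j k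
      using that on_perp_commute by blast
  qed
  moreover have "\<forall>i j k. {i, j, k} = {1, 2, 3 :: nat} \<longrightarrow> on_perp H (Q i) (P j) (P k)"
    by (rule permutations3_from_cyclic3) (use HQ on_perp_commute in \<open>blast+\<close>)
  moreover have "\<forall>i j k. {i, j, k} = {1, 2, 3 :: nat} \<longrightarrow> on_perp Z (P i) (Q j) (Q k)"
    by (rule permutations3_from_cyclic3) (use ZP on_perp_commute in \<open>blast+\<close>)
  moreover have "perspector (P 1) (P 2) (P 3) (Q 1) (Q 2) (Q 3) H"
    unfolding perspector_def using line cyclic H_altitude by blast
  moreover have "orthology_center (Q 1) (Q 2) (Q 3) (P 1) (P 2) (P 3) H"
    unfolding orthology_center_def using HQ cyclic by blast
  moreover have Z_center: "orthology_center (P 1) (P 2) (P 3) (Q 1) (Q 2) (Q 3) Z"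
    unfolding orthology_center_def using ZP cyclic by blast
  moreover have "orthologic (P 1) (P 2) (P 3) (Q 1) (Q 2) (Q 3)"
    unfolding orthologic_def using Z_center by blast
  ultimately show ?thesis using H_altitude[OF cyclic(1)] H_altitude[OF cyclic(2)] H_altitude[OF cyclic(3)]
    by (intro conjI) simp_all
qed

definition ellipse_pt :: "real \<Rightarrow> real \<Rightarrow> real \<Rightarrow> pt" where
  "ellipse_pt a b \<theta> = (a * cos \<theta>, b * sin \<theta>)"

definition curvature_center :: "real \<Rightarrow> real \<Rightarrow> real \<Rightarrow> real \<Rightarrow> pt" where
  "curvature_center a b c \<theta> = (c ^ 2 * (cos \<theta>) ^ 3 / a, - (c ^ 2 * (sin \<theta>) ^ 3 / b))"

lemma ellipse_pt_add_2pi_int: "ellipse_pt a b (\<theta> + 2 * pi * of_int n) = ellipse_pt a b \<theta>"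
  by (simp add: ellipse_pt_def cos_add sin_add)

lemma curvature_center_add_2pi_int:
  "curvature_center a b c (\<theta> + 2 * pi * of_int n) = curvature_center a b c \<theta>"
  by (simp add: curvature_center_def cos_add sin_add)

lemma sin_treble: "sin (3 * x) = 3 * sin x - 4 * sin x ^ 3" for x :: real
proof -
  have "sin (3 * x) = sin (2 * x) * cos x + cos (2 * x) * sin x"
    using sin_add[of "2 * x" x] by simp
  also have "\<dots> = 2 * sin x * cos x ^ 2 + (1 - 2 * sin x ^ 2) * sin x"
    by (simp add: sin_double cos_double_sin power2_eq_square)
  also have "\<dots> = 3 * sin x - 4 * sin x ^ 3"
    unfolding cos_squared_eq by (simp add: algebra_simps power2_eq_square power3_eq_cube)
  finally show ?thesis .
qed

lemma cos_cube_chord: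
  fixes \<theta> d :: real
  assumes "sin (3 * d) = 0"
  shows "cos (\<theta> + d) ^ 3 - cos (\<theta> - d) ^ 3 = - 3 / 2 * sin \<theta> * sin d"
proof -
  have cube: "cos x ^ 3 = (3 * cos x + cos (3 * x)) / 4" for x :: real
    by (simp add: cos_treble_cos)
  have "cos (3 * (\<theta> + d)) - cos (3 * (\<theta> - d)) = - 2 * sin (3 * \<theta>) * sin (3 * d)"
    by (simp add: distrib_left right_diff_distrib cos_add cos_diff)
  moreover have "cos (\<theta> + d) - cos (\<theta> - d) = - 2 * sin \<theta> * sin d"
    by (simp add: cos_add cos_diff)
  ultimately show ?thesis
    using assms unfolding cube[of "\<theta> + d"] cube[of "\<theta> - d"] by (simp add: field_simps)
qed

lemma sin_cube_chord:
  fixes \<theta> d :: real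
  assumes "sin (3 * d) = 0"
  shows "sin (\<theta> + d) ^ 3 - sin (\<theta> - d) ^ 3 = 3 / 2 * cos \<theta> * sin d"
proof -
  have cube: "sin x ^ 3 = (3 * sin x - sin (3 * x)) / 4" for x :: real
    by (simp add: sin_treble)
  have "sin (3 * (\<theta> + d)) - sin (3 * (\<theta> - d)) = 2 * cos (3 * \<theta>) * sin (3 * d)"
    by (simp add: distrib_left right_diff_distrib sin_add sin_diff)
  moreover have "sin (\<theta> + d) - sin (\<theta> - d) = 2 * cos \<theta> * sin d"
    by (simp add: sin_add sin_diff)
  ultimately show ?thesis
    using assms unfolding cube[of "\<theta> + d"] cube[of "\<theta> - d"] by (simp add: field_simps)
qed

lemma normal_orthogonal_symmetric_chord:
  assumes "a \<noteq> 0" "b \<noteq> 0" "c ^ 2 = a ^ 2 - b ^ 2"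
  shows "dotp (vsub (curvature_center a b c \<theta>) (ellipse_pt a b \<theta>))
           (vsub (ellipse_pt a b (\<theta> + d)) (ellipse_pt a b (\<theta> - d))) = 0"
proof -
  have chord: "vsub (ellipse_pt a b (\<theta> + d)) (ellipse_pt a b (\<theta> - d))
      = (- 2 * a * sin d * sin \<theta>, 2 * b * sin d * cos \<theta>)"
    by (simp add: vsub_def ellipse_pt_def cos_add cos_diff sin_add sin_diff algebra_simps)
  have "dotp (vsub (curvature_center a b c \<theta>) (ellipse_pt a b \<theta>))
           (- 2 * a * sin d * sin \<theta>, 2 * b * sin d * cos \<theta>)
      = - 2 * sin d * sin \<theta> * cos \<theta> * (c ^ 2 * (cos \<theta> ^ 2 + sin \<theta> ^ 2) - a ^ 2 + b ^ 2)"
    using assms(1,2)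
    by (simp add: dotp_def vsub_def ellipse_pt_def curvature_center_def
        field_simps power2_eq_square power3_eq_cube
        del: sin_cos_squared_add sin_cos_squared_add2 sin_cos_squared_add3)
  also have "\<dots> = 0" using assms(3) by simp
  finally show ?thesis unfolding chord .
qed

lemma antipode_on_perpendicular:
  assumes "a \<noteq> 0" "b \<noteq> 0" "sin (3 * d) = 0"
  shows "dotp (vsub (neg_pt (ellipse_pt a b (- 3 * \<theta>))) (ellipse_pt a b \<theta>))
           (vsub (curvature_center a b c (\<theta> + d)) (curvature_center a b c (\<theta> - d))) = 0"
proof -
  have "dotp (vsub (neg_pt (ellipse_pt a b (- 3 * \<theta>))) (ellipse_pt a b \<theta>))
           (vsub (curvature_center a b c (\<theta> + d)) (curvature_center a b c (\<theta> - d)))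
      = - (c ^ 2) * ((cos (3 * \<theta>) + cos \<theta>) * (cos (\<theta> + d) ^ 3 - cos (\<theta> - d) ^ 3)
                 + (sin (3 * \<theta>) - sin \<theta>) * (sin (\<theta> + d) ^ 3 - sin (\<theta> - d) ^ 3))"
    using assms(1,2)
    by (simp add: dotp_def vsub_def neg_pt_def ellipse_pt_def curvature_center_def field_simps)
  also have "\<dots> = 3 / 2 * c ^ 2 * sin d * (sin \<theta> * cos (3 * \<theta>) - cos \<theta> * sin (3 * \<theta>)
                 + 2 * sin \<theta> * cos \<theta>)"
    by (simp add: cos_cube_chord[OF assms(3)] sin_cube_chord[OF assms(3)] field_simps)
  also have "sin \<theta> * cos (3 * \<theta>) - cos \<theta> * sin (3 * \<theta>) = - (2 * sin \<theta> * cos \<theta>)"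
    using sin_diff[of "3 * \<theta>" \<theta>] by (simp add: sin_double)
  finally show ?thesis by simp
qed

lemma collinear3_ellipse_pt_iff:
  "collinear3 (ellipse_pt a b t1) (ellipse_pt a b t2) (ellipse_pt a b t3)
     \<longleftrightarrow> a * b * (sin (t2 - t1) + sin (t3 - t2) + sin (t1 - t3)) = 0"
  by (simp add: collinear3_def ellipse_pt_def sin_diff algebra_simps)

lemma ellipse_equiangular_triangle_not_collinear:
  assumes "a \<noteq> 0" "b \<noteq> 0"
  shows "\<not> collinear3 (ellipse_pt a b \<theta>) (ellipse_pt a b (\<theta> - 2 * pi / 3))
    (ellipse_pt a b (\<theta> - 4 * pi / 3))"
proof -
  have "\<theta> - 2 * pi / 3 - \<theta> = - (2 * pi / 3)" "\<theta> - 4 * pi / 3 - (\<theta> - 2 * pi / 3) = - (2 * pi / 3)"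
    "\<theta> - (\<theta> - 4 * pi / 3) = - (2 * pi / 3) + 2 * pi"
    by simp_all
  then have "sin (\<theta> - 2 * pi / 3 - \<theta>) + sin (\<theta> - 4 * pi / 3 - (\<theta> - 2 * pi / 3))
      + sin (\<theta> - (\<theta> - 4 * pi / 3)) = - 3 * sqrt 3 / 2"
    by (simp only: sin_periodic sin_minus sin_120)
  then show ?thesis
    using assms by (simp add: collinear3_ellipse_pt_iff)
qed

lemma ellipse_pt_neq_curvature_center:
  assumes "a \<noteq> 0" "b \<noteq> 0" "c ^ 2 = a ^ 2 - b ^ 2"
  shows "ellipse_pt a b \<theta> \<noteq> curvature_center a b c \<theta>"
proof
  assume eq: "ellipse_pt a b \<theta> = curvature_center a b c \<theta>"
  have "sin \<theta> * (b ^ 2 + c ^ 2 * sin \<theta> ^ 2) = 0"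
    using eq assms(2)
    by (simp add: ellipse_pt_def curvature_center_def field_simps power2_eq_square power3_eq_cube)
  moreover have "b ^ 2 + c ^ 2 * sin \<theta> ^ 2 > 0"
    using assms(2) by (simp add: add_pos_nonneg)
  ultimately have "sin \<theta> = 0" by simp
  then have cos2: "cos \<theta> ^ 2 = 1" using sin_cos_squared_add[of \<theta>] by simp
  have "a ^ 2 * cos \<theta> = c ^ 2 * cos \<theta> ^ 3"
    using eq assms(1)
    by (simp add: ellipse_pt_def curvature_center_def field_simps power2_eq_square power3_eq_cube)
  also have "cos \<theta> ^ 3 = cos \<theta>" using cos2 by (simp add: power3_eq_cube power2_eq_square)
  finally have "b ^ 2 * cos \<theta> = 0" using assms(3) by (simp add: algebra_simps)
  then show False using assms(2) cos2 by simp
qed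

lemma curvature_center_eq_imp_ellipse_pt_eq:
  assumes "a \<noteq> 0" "b \<noteq> 0" "c \<noteq> 0" "curvature_center a b c s = curvature_center a b c t"
  shows "ellipse_pt a b s = ellipse_pt a b t"
proof -
  have "cos s ^ 3 = cos t ^ 3" "sin s ^ 3 = sin t ^ 3"
    using assms by (simp_all add: curvature_center_def)
  then have "cos s = cos t" "sin s = sin t"
    by (metis odd_numeral odd_real_root_unique)+
  then show ?thesis by (simp add: ellipse_pt_def)
qed

lemma cyclic3_angle_shifts:
  fixes u :: real and t :: "nat \<Rightarrow> real"
  assumes "\<And>i. t i = - u / 3 - 2 * pi * (real i - 1) / 3" and "cyclic3 i j k"
  shows "\<exists>n m l :: int. t j = t i - 2 * pi / 3 + 2 * pi * of_int n
    \<and> t k = t i + 2 * pi / 3 + 2 * pi * of_int m \<and> u = - 3 * t i + 2 * pi * of_int l"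
  using assms(2) unfolding cyclic3_def
proof (elim insertE emptyE)
  assume "(i, j, k) = (1, 2, 3)"
  then show ?thesis by (intro exI[of _ 0] exI[of _ "-1"]) (simp add: assms(1) field_simps)
next
  assume "(i, j, k) = (2, 3, 1)"
  then show ?thesis by (intro exI[of _ 0] exI[of _ "-1"]) (simp add: assms(1) field_simps)
next
  assume "(i, j, k) = (3, 1, 2)"
  then show ?thesis by (intro exI[of _ 1] exI[of _ 0] exI[of _ "-2"]) (simp add: assms(1) field_simps)
qed

theorem proposition8p3:
  fixes a b c u :: real and t :: "nat \<Rightarrow> real" and P Q :: "nat \<Rightarrow> pt" and M H :: pt
  assumes "a > b" "b > 0" "c > 0" "c ^ 2 = a ^ 2 - b ^ 2"
    and "M = (a * cos u, b * sin u)"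
    and "\<And>i. t i = - u / 3 - 2 * pi * (real i - 1) / 3"
    and "\<And>i. P i = (a * cos (t i), b * sin (t i))"
    and "\<And>i. Q i = (c ^ 2 * (cos (t i)) ^ 3 / a, - (c ^ 2 * (sin (t i)) ^ 3 / b))"
    and "H = orthocenter (P 1) (P 2) (P 3)"
  shows "\<not> collinear3 (P 1) (P 2) (P 3)
    \<and> (\<forall>i j k. {i, j, k} = {1, 2, 3 :: nat} \<longrightarrow>
          P i \<noteq> Q i \<and> (\<forall>X. on_line X (P i) (Q i) \<longleftrightarrow> on_perp X (P i) (P j) (P k)))
    \<and> on_perp H (P 1) (P 2) (P 3) \<and> on_perp H (P 2) (P 3) (P 1) \<and> on_perp H (P 3) (P 1) (P 2)
    \<and> perspector (P 1) (P 2) (P 3) (Q 1) (Q 2) (Q 3) H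
    \<and> (\<forall>i j k. {i, j, k} = {1, 2, 3 :: nat} \<longrightarrow> on_perp H (Q i) (P j) (P k))
    \<and> (\<forall>i j k. {i, j, k} = {1, 2, 3 :: nat} \<longrightarrow> on_perp (neg_pt M) (P i) (Q j) (Q k))
    \<and> orthologic (P 1) (P 2) (P 3) (Q 1) (Q 2) (Q 3)
    \<and> orthology_center (Q 1) (Q 2) (Q 3) (P 1) (P 2) (P 3) H
    \<and> orthology_center (P 1) (P 2) (P 3) (Q 1) (Q 2) (Q 3) (neg_pt M)"
proof -
  have abc: "a \<noteq> 0" "b \<noteq> 0" "c \<noteq> 0" using assms(1-3) by auto
  have P: "P i = ellipse_pt a b (t i)" and Q: "Q i = curvature_center a b c (t i)" for i
    using assms(7,8) by (simp_all add: ellipse_pt_def curvature_center_def)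
  have M: "M = ellipse_pt a b u" using assms(5) by (simp add: ellipse_pt_def)
  have "t 2 = t 1 - 2 * pi / 3" "t 3 = t 1 - 4 * pi / 3"
    using assms(6)[of 1] assms(6)[of 2] assms(6)[of 3] by simp_all
  then have ncol: "\<not> collinear3 (P 1) (P 2) (P 3)"
    using ellipse_equiangular_triangle_not_collinear[OF abc(1,2)] by (simp add: P)
  have vertices: "P j = ellipse_pt a b (t i - 2 * pi / 3) \<and> P k = ellipse_pt a b (t i + 2 * pi / 3)
      \<and> Q j = curvature_center a b c (t i - 2 * pi / 3) \<and> Q k = curvature_center a b c (t i + 2 * pi / 3)
      \<and> M = ellipse_pt a b (- 3 * t i)" if "cyclic3 i j k" for i j k
    using cyclic3_angle_shifts[OF assms(6) that]
    by (elim exE conjE) (simp only: P Q M ellipse_pt_add_2pi_int curvature_center_add_2pi_int)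
  have "sin (3 * (2 * pi / 3)) = 0" by simp
  note ellipse_facts = normal_orthogonal_symmetric_chord[OF abc(1,2) assms(4)]
    antipode_on_perpendicular[OF abc(1,2) this]
  show ?thesis
  proof (rule conjI[OF ncol orthologic_of_points_on_altitudes[OF ncol _ _ _ _ assms(9)]])
    show "P i \<noteq> Q i" for i
      using ellipse_pt_neq_curvature_center[OF abc(1,2) assms(4)] by (simp add: P Q)
    show "Q j \<noteq> Q k" if "cyclic3 i j k" for i j k
    proof
      assume "Q j = Q k"
      then have "P j = P k" unfolding P Q by (rule curvature_center_eq_imp_ellipse_pt_eq[OF abc])
      with ncol that show False by (auto simp: cyclic3_def collinear3_def)
    qed
    show "dotp (vsub (Q i) (P i)) (vsub (P k) (P j)) = 0" if "cyclic3 i j k" for i j k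
      using vertices[OF that] ellipse_facts(1) by (simp add: P Q)
    show "dotp (vsub (neg_pt M) (P i)) (vsub (Q k) (Q j)) = 0" if "cyclic3 i j k" for i j k
      using vertices[OF that] ellipse_facts(2) by (simp add: P)
  qed
qed

end
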